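(* Let $\Gamma$ be an inhomogeneous $Y$-semigroup. Assume that $Y_1 \subseteq \mathcal{D}(A_\Gamma)$ and that $\Gamma$ is $Y_1$-super strongly $s$-continuous and $Y_1$-strongly $t$-continuous. Then \[ \frac{\partial}{\partial s} \Gamma(s,t)f=-A_\Gamma(s) \Gamma(s,t)f \qquad \forall (s,t) \in \Delta_J,\ \forall f \in Y_1 . \]
   Context: Let $(Y,\|\cdot\|)$ be a real separable Banach space and $(Y_1,\|\cdot\|_{Y_1})$ a real separable Banach space continuously embedded in $Y$ (i.e. $Y_1\subseteq Y$ and $\|f\|\le c_1\|f\|_{Y_1}$ for all $f\in Y_1$, for some constant $c_1$). $\mathcal B(Y)$ denotes the bounded linear operators on $Y$. $J$ is either $\mathbb{R}^+$ or $[0,T_\infty]$ for some $T_\infty>0$, and $\Delta_J=\{(s,t)\in J^2: s\le t\}$, $J(s)=\{t\in J: t\ge s\}$. An inhomogeneous $Y$-semigroup is a map $\Gamma:\Delta_J\to\mathcal B(Y)$ with $\Gamma(t,t)=I$ for all $t\in J$ and $\Gamma(s,r)\Gamma(r,t)=\Gamma(s,t)$ whenever $s\le r\le t$ in $J$. Its generator: for $t\in J$, $\mathcal D(A_\Gamma(t))$ is the set of $f\in Y$ such that $\lim_{h\downarrow0,\,t+h\in J}h^{-1}(\Gamma(t,t+h)-I)f$ and $\lim_{h\downarrow 0,\,t-h\in J}h^{-1}(\Gamma(t-h,t)-I)f$ exist in $Y$ and are equal, $A_\Gamma(t)f$ being this common value; $\mathcal D(A_\Gamma)=\bigcap_{t\in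 J}\mathcal D(A_\Gamma(t))$. All limits are in the $Y$-norm unless stated. $\Gamma$ is $Y_1$-strongly $t$-continuous if for every $f\in Y_1$ and $s\in J$ the map $u\mapsto\Gamma(s,u)f$ is continuous from $J(s)$ into $(Y,\|\cdot\|)$. $\Gamma$ is $Y_1$-super strongly $s$-continuous if $\Gamma(s,t)Y_1\subseteq Y_1$ for all $(s,t)\in\Delta_J$ and, for every $f\in Y_1$ and $t\in J$, the map $u\mapsto\Gamma(u,t)f$ is continuous on $\{u\in J:u\le t\}$ for the norm $\|\cdot\|_{Y_1}$. Derivatives at endpoints of the domain are one-sided. *)

theory Defs
  imports "HOL-Analysis.Analysis"
begin

text \<open>Y is the type 'y, Y1 is the type 'z, embedded into Y by a bounded linear
injection emb (continuous embedding). Separability = second countability.\<close>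

definition admissible_J :: "real set \<Rightarrow> bool" where
  "admissible_J J \<longleftrightarrow> J = {0..} \<or> (\<exists>T>0. J = {0..T})"

definition inhom_semigroup :: "real set \<Rightarrow> (real \<Rightarrow> real \<Rightarrow> 'y::real_normed_vector \<Rightarrow>\<^sub>L 'y) \<Rightarrow> bool" where
  "inhom_semigroup J \<Gamma> \<longleftrightarrow>
     (\<forall>t\<in>J. \<Gamma> t t = id_blinfun) \<and>
     (\<forall>s\<in>J. \<forall>r\<in>J. \<forall>t\<in>J. s \<le> r \<and> r \<le> t \<longrightarrow> \<Gamma> s r o\<^sub>L \<Gamma> r t = \<Gamma> s t)"

definition gen_limit :: "real set \<Rightarrow> (real \<Rightarrow> real \<Rightarrow> 'y::real_normed_vector \<Rightarrow>\<^sub>L 'y) \<Rightarrow> real \<Rightarrow> 'y \<Rightarrow> 'y \<Rightarrow> bool" where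
  "gen_limit J \<Gamma> t f L \<longleftrightarrow>
     ((\<lambda>h. (1/h) *\<^sub>R (\<Gamma> t (t+h) f - f)) \<longlongrightarrow> L) (at 0 within {h. 0 < h \<and> t + h \<in> J}) \<and>
     ((\<lambda>h. (1/h) *\<^sub>R (\<Gamma> (t-h) t f - f)) \<longlongrightarrow> L) (at 0 within {h. 0 < h \<and> t - h \<in> J})"

definition gen_dom_at :: "real set \<Rightarrow> (real \<Rightarrow> real \<Rightarrow> 'y::real_normed_vector \<Rightarrow>\<^sub>L 'y) \<Rightarrow> real \<Rightarrow> 'y set" where
  "gen_dom_at J \<Gamma> t = {f. \<exists>L. gen_limit J \<Gamma> t f L}"

definition generator :: "real set \<Rightarrow> (real \<Rightarrow> real \<Rightarrow> 'y::real_normed_vector \<Rightarrow>\<^sub>L 'y) \<Rightarrow> real \<Rightarrow> 'y \<Rightarrow> 'y" where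
  "generator J \<Gamma> t f = (SOME L. gen_limit J \<Gamma> t f L)"

definition gen_dom :: "real set \<Rightarrow> (real \<Rightarrow> real \<Rightarrow> 'y::real_normed_vector \<Rightarrow>\<^sub>L 'y) \<Rightarrow> 'y set" where
  "gen_dom J \<Gamma> = (\<Inter>t\<in>J. gen_dom_at J \<Gamma> t)"

definition strongly_t_cont :: "real set \<Rightarrow> (real \<Rightarrow> real \<Rightarrow> 'y::real_normed_vector \<Rightarrow>\<^sub>L 'y) \<Rightarrow> ('z \<Rightarrow> 'y) \<Rightarrow> bool" where
  "strongly_t_cont J \<Gamma> emb \<longleftrightarrow>
     (\<forall>f s. s \<in> J \<longrightarrow> continuous_on {u\<in>J. s \<le> u} (\<lambda>u. \<Gamma> s u (emb f)))"

definition super_strongly_s_cont :: "real set \<Rightarrow> (real \<Rightarrow> real \<Rightarrow> 'y::real_normed_vector \<Rightarrow>\<^sub>L 'y) \<Rightarrow> ('z::topological_space \<Rightarrow> 'y) \<Rightarrow> bool" where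
  "super_strongly_s_cont J \<Gamma> emb \<longleftrightarrow>
     (\<forall>s\<in>J. \<forall>t\<in>J. s \<le> t \<longrightarrow> (\<lambda>y. \<Gamma> s t y) ` range emb \<subseteq> range emb) \<and>
     (\<forall>f t. t \<in> J \<longrightarrow> (\<exists>g. (\<forall>u\<in>{u\<in>J. u \<le> t}. emb (g u) = \<Gamma> u t (emb f))
                              \<and> continuous_on {u\<in>J. u \<le> t} g))"

end

theory Submission
  imports Defs
begin

text \<open>
  For \<open>u < s\<close> the difference quotient of \<open>u \<mapsto> \<Gamma>(u,t)f\<close> is, by the semigroup law, minus the
  left generator quotient at \<open>s\<close> applied to the fixed vector \<open>\<Gamma>(s,t)f\<close>. For \<open>u > s\<close> it is
  \<open>-(\<Gamma>(s,u) - I)/(u-s)\<close> applied to the moving vector \<open>\<Gamma>(u,t)f\<close>. These operators, viewed on \<open>Y\<^sub>1\<close>,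
  converge pointwise because \<open>Y\<^sub>1 \<subseteq> \<D>(A\<^sub>\<Gamma>)\<close>; by Banach--Steinhaus they are uniformly bounded
  along every sequence \<open>u\<^sub>n \<rightarrow> s\<close>, so the \<open>Y\<^sub>1\<close>-continuity of \<open>u \<mapsto> \<Gamma>(u,t)f\<close> lets us replace
  the moving vector by \<open>\<Gamma>(s,t)f\<close>.
\<close>

lemma pointwise_bounded_family_bounded_on_ball:
  fixes T :: "'i \<Rightarrow> 'z::banach \<Rightarrow> 'y::real_normed_vector"
  assumes lin: "\<And>i. bounded_linear (T i)"
    and pointwise_bounded: "\<And>z. \<exists>B. \<forall>i. norm (T i z) \<le> B"
  shows "\<exists>x0 r k. r > 0 \<and> (\<forall>i. \<forall>z\<in>ball x0 r. norm (T i z) \<le> k)"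
proof -
  define F where "F k = {z. \<forall>i. norm (T i z) \<le> real k}" for k :: nat
  have closed_F: "closed (F k)" for k
  proof -
    have "F k = (\<Inter>i. {z. norm (T i z) \<le> real k})" by (auto simp: F_def)
    moreover have "closed {z. norm (T i z) \<le> real k}" for i
      by (intro closed_Collect_le continuous_on_norm linear_continuous_on lin continuous_on_const)
    ultimately show ?thesis by auto
  qed
  have "z \<in> \<Union>(range F)" for z
  proof -
    obtain B where B: "\<forall>i. norm (T i z) \<le> B" using pointwise_bounded by blast
    obtain k :: nat where "B \<le> real k" using real_arch_simple by blast
    then have "z \<in> F k" using B by (auto simp: F_def intro: order_trans)
    then show ?thesis by blast
  qed
  then have cover: "\<Union>(range F) = UNIV" by auto
  have "\<exists>k. interior (F k) \<noteq> {}"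
  proof (rule ccontr)
    assume "\<not> ?thesis"
    then have "euclidean interior_of \<Union>(range F) = {}"
      by (intro Baire_category_alt) (auto simp: completely_metrizable_space_euclidean closed_F)
    then show False using cover by simp
  qed
  then obtain k r x0 where "r > 0" "ball x0 r \<subseteq> F k"
    by (metis equals0I open_contains_ball open_interior interior_subset subset_trans)
  then show ?thesis unfolding F_def by blast
qed

lemma banach_steinhaus:
  fixes T :: "'i \<Rightarrow> 'z::banach \<Rightarrow> 'y::real_normed_vector"
  assumes lin: "\<And>i. bounded_linear (T i)"
    and pointwise_bounded: "\<And>z. \<exists>B. \<forall>i. norm (T i z) \<le> B"
  shows "\<exists>M. \<forall>i z. norm (T i z) \<le> M * norm z"
proof -
  obtain x0 r k where r: "r > 0" and ball: "\<And>i z. z \<in> ball x0 r \<Longrightarrow> norm (T i z) \<le> k"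
    using pointwise_bounded_family_bounded_on_ball[OF lin pointwise_bounded] by blast
  have "norm (T i z) \<le> (4 * k / r) * norm z" for i z
  proof (cases "z = 0")
    case True
    then show ?thesis using linear_0[OF bounded_linear.linear[OF lin]] by simp
  next
    case False
    define c where "c = r / (2 * norm z)"
    have c: "c > 0" using False r by (simp add: c_def)
    have "norm (c *\<^sub>R z) = r / 2" using False r by (simp add: c_def)
    then have "x0 + c *\<^sub>R z \<in> ball x0 r" using r by (simp add: dist_norm)
    then have bound_shifted: "norm (T i (x0 + c *\<^sub>R z)) \<le> k" by (rule ball)
    have bound_x0: "norm (T i x0) \<le> k" using r by (intro ball) simp
    have "c *\<^sub>R T i z = T i (x0 + c *\<^sub>R z) - T i x0"
      using bounded_linear.linear[OF lin[of i]] by (simp add: linear_add linear_scale)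
    then have "c * norm (T i z) = norm (T i (x0 + c *\<^sub>R z) - T i x0)"
      using c by (metis abs_of_pos norm_scaleR)
    also have "\<dots> \<le> 2 * k"
      using norm_triangle_ineq4[of "T i (x0 + c *\<^sub>R z)" "T i x0"] bound_shifted bound_x0
      by linarith
    finally have "c * norm (T i z) \<le> 2 * k" .
    then have "norm (T i z) \<le> 2 * k / c" using c by (simp add: field_simps)
    also have "2 * k / c = (4 * k / r) * norm z" using False r by (simp add: c_def field_simps)
    finally show ?thesis .
  qed
  then show ?thesis by blast
qed

text \<open>
  Pointwise convergence along a filter does not bound a family of operators uniformly, but it does
  along each sequence, which suffices because the base space is first countable.
\<close>
lemma tendsto_bounded_linear_family_apply_null:
  fixes T :: "'a::first_countable_topology \<Rightarrow> 'z::banach \<Rightarrow> 'y::real_normed_vector"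
  assumes lin: "\<And>a. bounded_linear (T a)"
    and convergent: "\<And>z. \<exists>L. ((\<lambda>a. T a z) \<longlongrightarrow> L) (at a0 within S)"
    and null: "(d \<longlongrightarrow> 0) (at a0 within S)"
  shows "((\<lambda>a. T a (d a)) \<longlongrightarrow> 0) (at a0 within S)"
  unfolding tendsto_at_iff_sequentially
proof (intro allI impI)
  fix X assume X: "\<forall>n. X n \<in> S - {a0}" "X \<longlonglongrightarrow> a0"
  have "\<exists>B. \<forall>n. norm (T (X n) z) \<le> B" for z
  proof -
    obtain L where "((\<lambda>a. T a z) \<longlongrightarrow> L) (at a0 within S)" using convergent by blast
    then have "((\<lambda>a. T a z) \<circ> X) \<longlonglongrightarrow> L" using X unfolding tendsto_at_iff_sequentially by blast
    then have "Bseq ((\<lambda>a. T a z) \<circ> X)" by (rule convergent_imp_Bseq[OF convergentI])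
    then show ?thesis unfolding Bseq_def by (auto simp: comp_def)
  qed
  then obtain M where M: "\<And>n z. norm (T (X n) z) \<le> M * norm z"
    using banach_steinhaus[of "\<lambda>n. T (X n)"] lin by blast
  have "(d \<circ> X) \<longlonglongrightarrow> 0" using null X unfolding tendsto_at_iff_sequentially by blast
  then have "(\<lambda>n. M * norm (d (X n))) \<longlonglongrightarrow> 0"
    by (intro tendsto_mult_right_zero tendsto_norm_zero) (simp add: comp_def)
  then show "((\<lambda>a. T a (d a)) \<circ> X) \<longlonglongrightarrow> 0"
    by (rule Lim_null_comparison[rotated]) (auto simp: M)
qed

lemma at_within_eq_filtermap_plus:
  fixes s :: "'a::real_normed_vector"
  shows "at s within A = filtermap (\<lambda>h. s + h) (at 0 within {h. s + h \<in> A})"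
proof -
  have "nhds s = filtermap (\<lambda>h. s + h) (nhds 0)"
    using filtermap_nhds_shift[of "-s" 0] by (simp add: add.commute)
  then show ?thesis
    by (simp add: filter_eq_iff eventually_filtermap eventually_at_filter)
qed

lemma at_within_eq_filtermap_minus:
  fixes s :: "'a::real_normed_vector"
  shows "at s within A = filtermap (\<lambda>h. s - h) (at 0 within {h. s - h \<in> A})"
proof -
  have "nhds s = filtermap (\<lambda>x. x + s) (nhds 0)"
    using filtermap_nhds_shift[of "-s" 0] by simp
  also have "\<dots> = filtermap (\<lambda>x. x + s) (filtermap uminus (nhds 0))"
    by (simp only: filtermap_nhds_minus minus_zero)
  also have "\<dots> = filtermap (\<lambda>h. s - h) (nhds 0)"
    by (simp add: filtermap_filtermap)
  finally show ?thesis
    by (simp add: filter_eq_iff eventually_filtermap eventually_at_filter)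
qed

lemma has_vector_derivative_iff_difference_quotient:
  fixes f :: "real \<Rightarrow> 'a::real_normed_vector"
  shows "(f has_vector_derivative D) (at x within S) \<longleftrightarrow>
         ((\<lambda>y. (1 / (y - x)) *\<^sub>R (f y - f x)) \<longlongrightarrow> D) (at x within S)"
proof -
  have "norm ((f y - f x - (y - x) *\<^sub>R D) /\<^sub>R norm (y - x)) =
        norm ((1 / (y - x)) *\<^sub>R (f y - f x) - D)" if "y \<noteq> x" for y
  proof -
    have "(1 / (y - x)) *\<^sub>R (f y - f x) - D = (1 / (y - x)) *\<^sub>R (f y - f x - (y - x) *\<^sub>R D)"
      using that by (simp add: scaleR_diff_right)
    then show ?thesis by (simp add: field_class.field_divide_inverse)
  qed
  then have "\<forall>\<^sub>F y in at x within S. norm ((f y - f x - (y - x) *\<^sub>R D) /\<^sub>R norm (y - x)) =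
        norm ((1 / (y - x)) *\<^sub>R (f y - f x) - D)"
    by (auto simp: eventually_at_filter)
  then have "((\<lambda>y. (f y - f x - (y - x) *\<^sub>R D) /\<^sub>R norm (y - x)) \<longlongrightarrow> 0) (at x within S) \<longleftrightarrow>
     ((\<lambda>y. (1 / (y - x)) *\<^sub>R (f y - f x) - D) \<longlongrightarrow> 0) (at x within S)"
    by (subst (1 2) tendsto_norm_zero_iff[symmetric]) (rule tendsto_cong)
  then show ?thesis
    unfolding has_vector_derivative_def has_derivative_at_within LIM_zero_iff
    using bounded_linear_scaleR_left by blast
qed

lemma has_vector_derivative_from_one_sided_quotients:
  fixes f :: "real \<Rightarrow> 'a::real_normed_vector"
  assumes "((\<lambda>y. (1 / (y - x)) *\<^sub>R (f y - f x)) \<longlongrightarrow> D) (at x within {y\<in>S. x < y})"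
    and "((\<lambda>y. (1 / (y - x)) *\<^sub>R (f y - f x)) \<longlongrightarrow> D) (at x within {y\<in>S. y < x})"
  shows "(f has_vector_derivative D) (at x within S)"
proof -
  have "at x within S = at x within ({y\<in>S. x < y} \<union> {y\<in>S. y < x})"
    unfolding at_within_def by (rule arg_cong[where f="\<lambda>X. inf _ (principal X)"]) auto
  then show ?thesis
    using assms by (simp add: has_vector_derivative_iff_difference_quotient Lim_within_Un)
qed

lemma inhom_semigroup_apply_compose:
  assumes "inhom_semigroup J \<Gamma>" "r \<in> J" "s \<in> J" "t \<in> J" "r \<le> s" "s \<le> t"
  shows "\<Gamma> r s (\<Gamma> s t y) = \<Gamma> r t y"
  using assms unfolding inhom_semigroup_def by (metis blinfun_apply_blinfun_compose)

lemma gen_limit_generator: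
  assumes "x \<in> gen_dom_at J \<Gamma> t"
  shows "gen_limit J \<Gamma> t x (generator J \<Gamma> t x)"
  using assms unfolding gen_dom_at_def generator_def by (auto intro: someI_ex)

lemma gen_limit_iff_one_sided_quotients:
  "gen_limit J \<Gamma> t x L \<longleftrightarrow>
     ((\<lambda>u. (1 / (u - t)) *\<^sub>R (\<Gamma> t u x - x)) \<longlongrightarrow> L) (at t within {u\<in>J. t < u}) \<and>
     ((\<lambda>u. (1 / (t - u)) *\<^sub>R (\<Gamma> u t x - x)) \<longlongrightarrow> L) (at t within {u\<in>J. u < t})"
proof -
  have "((\<lambda>u. (1 / (u - t)) *\<^sub>R (\<Gamma> t u x - x)) \<longlongrightarrow> L) (at t within {u\<in>J. t < u}) \<longleftrightarrow>
        ((\<lambda>h. (1 / h) *\<^sub>R (\<Gamma> t (t + h) x - x)) \<longlongrightarrow> L) (at 0 within {h. 0 < h \<and> t + h \<in> J})"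
    by (subst at_within_eq_filtermap_plus) (simp add: filterlim_filtermap conj_commute)
  moreover have "((\<lambda>u. (1 / (t - u)) *\<^sub>R (\<Gamma> u t x - x)) \<longlongrightarrow> L) (at t within {u\<in>J. u < t}) \<longleftrightarrow>
        ((\<lambda>h. (1 / h) *\<^sub>R (\<Gamma> (t - h) t x - x)) \<longlongrightarrow> L) (at 0 within {h. 0 < h \<and> t - h \<in> J})"
    by (subst at_within_eq_filtermap_minus) (simp add: filterlim_filtermap conj_commute)
  ultimately show ?thesis unfolding gen_limit_def by simp
qed

lemma generator_right_quotient_along_continuous_path:
  fixes \<Gamma> :: "real \<Rightarrow> real \<Rightarrow> ('y::real_normed_vector \<Rightarrow>\<^sub>L 'y)"
    and emb :: "'z::banach \<Rightarrow> 'y" and g :: "real \<Rightarrow> 'z"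
  assumes emb: "bounded_linear emb"
    and dom: "range emb \<subseteq> gen_dom_at J \<Gamma> s"
    and U: "U \<subseteq> {u\<in>J. s < u}"
    and g: "(g \<longlongrightarrow> g s) (at s within U)"
  shows "((\<lambda>u. (1 / (u - s)) *\<^sub>R (\<Gamma> s u (emb (g u)) - emb (g u)))
           \<longlongrightarrow> generator J \<Gamma> s (emb (g s))) (at s within U)"
proof -
  define T where "T u z = (1 / (u - s)) *\<^sub>R (\<Gamma> s u (emb z) - emb z)" for u z
  have lin: "bounded_linear (T u)" for u
    unfolding T_def
    by (intro bounded_linear_const_scaleR bounded_linear_sub
        bounded_linear_compose[OF blinfun.bounded_linear_right emb] emb)
  have T_lim: "((\<lambda>u. T u z) \<longlongrightarrow> generator J \<Gamma> s (emb z)) (at s within U)" for z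
  proof -
    have "gen_limit J \<Gamma> s (emb z) (generator J \<Gamma> s (emb z))"
      using dom by (intro gen_limit_generator) blast
    then show ?thesis
      using U unfolding gen_limit_iff_one_sided_quotients T_def
      by (meson tendsto_within_subset)
  qed
  have "((\<lambda>u. g u - g s) \<longlongrightarrow> 0) (at s within U)"
    using g by (simp add: LIM_zero)
  then have "((\<lambda>u. T u (g u - g s)) \<longlongrightarrow> 0) (at s within U)"
    using T_lim by (intro tendsto_bounded_linear_family_apply_null[OF lin]) auto
  then have "((\<lambda>u. T u (g u - g s) + T u (g s)) \<longlongrightarrow> 0 + generator J \<Gamma> s (emb (g s)))
               (at s within U)"
    using T_lim by (intro tendsto_add)
  moreover have "T u (g u - g s) + T u (g s) = T u (g u)" for u
    using linear_diff[OF bounded_linear.linear[OF lin[of u]]] by simp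
  ultimately show ?thesis unfolding T_def by simp
qed

lemma tendsto_right_quotient_inhom_semigroup:
  fixes \<Gamma> :: "real \<Rightarrow> real \<Rightarrow> ('y::real_normed_vector \<Rightarrow>\<^sub>L 'y)"
    and emb :: "'z::banach \<Rightarrow> 'y" and g :: "real \<Rightarrow> 'z"
  assumes semigroup: "inhom_semigroup J \<Gamma>" and emb: "bounded_linear emb"
    and dom: "range emb \<subseteq> gen_dom_at J \<Gamma> s"
    and s: "s \<in> J" and t: "t \<in> J" and "s \<le> t"
    and path: "\<And>u. u \<in> {u\<in>J. u \<le> t} \<Longrightarrow> emb (g u) = \<Gamma> u t y"
    and g: "continuous_on {u\<in>J. u \<le> t} g"
  shows "((\<lambda>u. (1 / (u - s)) *\<^sub>R (\<Gamma> u t y - \<Gamma> s t y)) \<longlongrightarrow> - generator J \<Gamma> s (\<Gamma> s t y))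
           (at s within {u\<in>{u\<in>J. u \<le> t}. s < u})" (is "(_ \<longlongrightarrow> _) (at s within ?U)")
proof -
  have x: "\<Gamma> s t y = emb (g s)" using path s \<open>s \<le> t\<close> by simp
  have "(g \<longlongrightarrow> g s) (at s within ?U)"
    using g s \<open>s \<le> t\<close> unfolding continuous_on_def by (auto intro: tendsto_within_subset)
  then have "((\<lambda>u. - ((1 / (u - s)) *\<^sub>R (\<Gamma> s u (emb (g u)) - emb (g u))))
               \<longlongrightarrow> - generator J \<Gamma> s (\<Gamma> s t y)) (at s within ?U)"
    unfolding x
    by (intro tendsto_minus generator_right_quotient_along_continuous_path[OF emb dom]) auto
  moreover have "- ((1 / (u - s)) *\<^sub>R (\<Gamma> s u (emb (g u)) - emb (g u))) =
      (1 / (u - s)) *\<^sub>R (\<Gamma> u t y - \<Gamma> s t y)" if "u \<in> ?U" for u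
  proof -
    have "\<Gamma> s u (\<Gamma> u t y) = \<Gamma> s t y"
      using inhom_semigroup_apply_compose[OF semigroup s _ t] that by simp
    then show ?thesis using path that by (simp add: scaleR_diff_right)
  qed
  ultimately show ?thesis
    by (rule Lim_transform_within[OF _ zero_less_one]) simp_all
qed

lemma tendsto_left_quotient_inhom_semigroup:
  assumes semigroup: "inhom_semigroup J \<Gamma>"
    and dom: "\<Gamma> s t y \<in> gen_dom_at J \<Gamma> s"
    and s: "s \<in> J" and t: "t \<in> J" and "s \<le> t"
  shows "((\<lambda>u. (1 / (u - s)) *\<^sub>R (\<Gamma> u t y - \<Gamma> s t y)) \<longlongrightarrow> - generator J \<Gamma> s (\<Gamma> s t y))
           (at s within {u\<in>{u\<in>J. u \<le> t}. u < s})" (is "(_ \<longlongrightarrow> _) (at s within ?L)")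
proof -
  let ?x = "\<Gamma> s t y"
  have "((\<lambda>u. (1 / (s - u)) *\<^sub>R (\<Gamma> u s ?x - ?x)) \<longlongrightarrow> generator J \<Gamma> s ?x)
          (at s within {u\<in>J. u < s})"
    using gen_limit_generator[OF dom] unfolding gen_limit_iff_one_sided_quotients by blast
  then have "((\<lambda>u. - ((1 / (s - u)) *\<^sub>R (\<Gamma> u s ?x - ?x))) \<longlongrightarrow> - generator J \<Gamma> s ?x)
               (at s within ?L)"
    by (auto intro: tendsto_minus tendsto_within_subset)
  moreover have "- ((1 / (s - u)) *\<^sub>R (\<Gamma> u s ?x - ?x)) = (1 / (u - s)) *\<^sub>R (\<Gamma> u t y - ?x)"
    if "u \<in> ?L" for u
  proof -
    have "\<Gamma> u s ?x = \<Gamma> u t y"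
      using inhom_semigroup_apply_compose[OF semigroup _ s t] \<open>s \<le> t\<close> that by simp
    moreover have "1 / (u - s) = - (1 / (s - u))" by (simp add: divide_simps)
    ultimately show ?thesis by simp
  qed
  ultimately show ?thesis
    by (rule Lim_transform_within[OF _ zero_less_one]) simp_all
qed

theorem theorem2p6:
  fixes J :: "real set"
    and \<Gamma> :: "real \<Rightarrow> real \<Rightarrow> ('y::{banach,second_countable_topology} \<Rightarrow>\<^sub>L 'y)"
    and emb :: "'z::{banach,second_countable_topology} \<Rightarrow> 'y"
  assumes "admissible_J J"
    and "bounded_linear emb" and "inj emb"
    and "inhom_semigroup J \<Gamma>"
    and "range emb \<subseteq> gen_dom J \<Gamma>"
    and "super_strongly_s_cont J \<Gamma> emb"
    and "strongly_t_cont J \<Gamma> emb"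
  shows "\<forall>s\<in>J. \<forall>t\<in>J. \<forall>f. s \<le> t \<longrightarrow>
           ((\<lambda>u. \<Gamma> u t (emb f)) has_vector_derivative
              (- generator J \<Gamma> s (\<Gamma> s t (emb f)))) (at s within {u\<in>J. u \<le> t})"
proof (intro ballI allI impI)
  fix s t f assume s: "s \<in> J" and t: "t \<in> J" and "s \<le> t"
  obtain g where path: "\<forall>u\<in>{u\<in>J. u \<le> t}. emb (g u) = \<Gamma> u t (emb f)"
    and g: "continuous_on {u\<in>J. u \<le> t} g"
    using conjunct2[OF assms(6)[unfolded super_strongly_s_cont_def]] t by blast
  have dom: "range emb \<subseteq> gen_dom_at J \<Gamma> s" using assms(5) s by (auto simp: gen_dom_def)
  moreover have "\<Gamma> s t (emb f) = emb (g s)" using path s \<open>s \<le> t\<close> by simp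
  ultimately have dom_x: "\<Gamma> s t (emb f) \<in> gen_dom_at J \<Gamma> s" by auto
  show "((\<lambda>u. \<Gamma> u t (emb f)) has_vector_derivative - generator J \<Gamma> s (\<Gamma> s t (emb f)))
          (at s within {u\<in>J. u \<le> t})"
    using tendsto_right_quotient_inhom_semigroup[OF assms(4,2) dom s t \<open>s \<le> t\<close> _ g] path
      tendsto_left_quotient_inhom_semigroup[OF assms(4) dom_x s t \<open>s \<le> t\<close>]
    by (intro has_vector_derivative_from_one_sided_quotients) auto
qed

end
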